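(* Consider DTR with heuristic $h_{e^*}$ during the backward pass of the linear feedforward network (as in the context). Suppose that, to compute all of the gradients associated with an evicted path of $L_k$ forward tensors (a maximal run of consecutive non-resident forward tensors, the resident forward tensor preceding it remaining in memory until banished), DTR has $2+k$ units of free memory. Then the number of (re)computations needed to compute all these gradients is $\mathcal{O}\!\left(L_k + \frac{L_k^2}{k^2}\log k\right)$.
   Context: Linear feedforward network: tensors $t_0, \dots, t_N$ and gradient tensors $\hat t_1, \dots, \hat t_N$; $t_0$ is always resident and free. $t_i = f_i(t_{i-1})$ for $1\le i\le N$; $\hat t_N = \hat f_N(t_{N-1})$, $\hat t_i = \hat f_i(t_{i-1}, \hat t_{i+1})$ for $2 \le i \le N-1$, $\hat t_1 = \hat f_1(\hat t_2)$. Unit memory per tensor, unit cost per operator. The program computes $t_1,\dots,t_N$ then $\hat t_N,\dots,\hat t_1$. The gradients associated with forward tensors $t_{a+1},\dots,t_{b}$ are the gradients $\hat t_i$ whose computation requires these forward tensors as input. DTR executes operations online in order; evicted inputs are rematerialized by recursively re-executing producing operations; inputs of an operation being (re)performed are locked; when memory is full DTR evicts an evictable resident tensor with minimal heuristic score. A tensor is live while some pending program operation uses it; once not live and all tensors directly computed from it are resident or banished, it is banished (permanently freed) and its children become unevictable. Heuristic $h_{e^*}(t) = |e^*(t)|$, where $e^*(t)$ is the set of currently evicted (computed, not banished) tensors reachable from $t$ backwards or forwards along dependency edges through evicted tensors only; not-yet-computed tensors are not considered. *)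

theory Defs
  imports Complex_Main
begin

text \<open>
Isolated model of the backward pass over one evicted path.
Forward tensors of the path are numbered 1..L (x_i stands for t_(a+i));
x_0 stands for the resident tensor t_a preceding the path: it is always
resident, never evictable and not charged to the memory budget.
Gradient g_j (j = L down to 1) stands for the gradient hat t_(a+j+1); it is
computed from x_j and g_(j+1).  g_(L+1) is resident at the start.
Memory budget for path tensors and gradients: 2 + k units.
While gradient g_j is being computed, x_(j+1),...,x_L are banished and
exactly one gradient (g_(j+1)) occupies memory; gradients are unevictable
(their parents are banished).  R is the set of resident path tensors.
\<close>

definition evicted :: "nat \<Rightarrow> nat set \<Rightarrow> nat set" where
  "evicted j R = {i. 1 \<le> i \<and> i \<le> j \<and> i \<notin> R}"

text \<open>Heuristic h_{e*}: number of evicted tensors reachable from t through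
evicted tensors only (on the chain; gradients are never evicted).\<close>
definition escore :: "nat \<Rightarrow> nat set \<Rightarrow> nat \<Rightarrow> nat" where
  "escore j R t = card {i \<in> evicted j R.
      (i < t \<and> {i..<t} \<subseteq> evicted j R) \<or> (t < i \<and> {t<..i} \<subseteq> evicted j R)}"

definition evict_step :: "nat \<Rightarrow> nat \<Rightarrow> nat set \<Rightarrow> nat set \<Rightarrow> bool" where
  "evict_step j lock R R' \<longleftrightarrow>
     (\<exists>t. t \<in> R \<and> t \<noteq> lock \<and>
          (\<forall>u\<in>R. u \<noteq> lock \<longrightarrow> escore j R t \<le> escore j R u) \<and>
          R' = R - {t})"

text \<open>Make room for one new tensor: memory in use is 1 (gradient g_(j+1))
plus card R; evict while 1 + card R + 1 > 2 + k.\<close>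
inductive alloc :: "nat \<Rightarrow> nat \<Rightarrow> nat \<Rightarrow> nat set \<Rightarrow> nat set \<Rightarrow> bool" where
  alloc_done: "card R \<le> k \<Longrightarrow> alloc k j lock R R"
| alloc_evict: "card R > k \<Longrightarrow> evict_step j lock R R1 \<Longrightarrow> alloc k j lock R1 R2
                 \<Longrightarrow> alloc k j lock R R2"

text \<open>Rematerialization of x_i (recursively), with cost = number of
operator executions.  The input x_(i-1) is locked while x_i is computed.\<close>
inductive mat :: "nat \<Rightarrow> nat \<Rightarrow> nat \<Rightarrow> nat set \<Rightarrow> nat set \<Rightarrow> nat \<Rightarrow> bool" where
  mat_res: "i = 0 \<or> i \<in> R \<Longrightarrow> mat k j i R R 0"
| mat_comp: "1 \<le> i \<Longrightarrow> i \<notin> R \<Longrightarrow> mat k j (i - 1) R R1 c \<Longrightarrow>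
              alloc k j (i - 1) R1 R2 \<Longrightarrow> mat k j i R (insert i R2) (Suc c)"

text \<open>Computing gradient g_j: materialize x_j, allocate g_j (x_j locked),
compute g_j, then g_(j+1) and x_j are banished.\<close>
inductive grad_step :: "nat \<Rightarrow> nat \<Rightarrow> nat set \<Rightarrow> nat set \<Rightarrow> nat \<Rightarrow> bool" where
  "mat k j j R R1 c \<Longrightarrow> alloc k j j R1 R2 \<Longrightarrow> grad_step k j R (R2 - {j}) (Suc c)"

inductive dtr_run :: "nat \<Rightarrow> nat \<Rightarrow> nat set \<Rightarrow> nat \<Rightarrow> bool" where
  run_done: "dtr_run k 0 R 0"
| run_step: "1 \<le> j \<Longrightarrow> grad_step k j R R1 c1 \<Longrightarrow> dtr_run k (j - 1) R1 c2
              \<Longrightarrow> dtr_run k j R (c1 + c2)"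

end

theory Submission
  imports Defs
begin

text \<open>Rematerializing \<open>x\<^sub>j\<close> from the highest resident tensor \<open>x\<^sub>r\<close> costs \<open>u + 1\<close> with \<open>u = j - r\<close>.
  Meanwhile \<open>h\<^sub>e\<^sub>*\<close> evicts a tensor whose two adjacent evicted runs are shortest. The old resident
  tensors are never evicted, and averaging over the \<open>m\<close> memory units available shows that the
  new evicted runs have length \<open>O(u / m)\<close>. Hence a potential \<open>\<Sum> w(\<sigma>) gap\<^sup>2 + 2 max - card\<close>,
  with weights \<open>w(\<sigma>) = min 1 (40 / \<sigma>)\<close> for the \<open>\<sigma>\<close>-th memory slot from the top, drops by at
  least the cost of every gradient step. After the first gradient, computed from an empty memory,
  all runs have length \<open>O(L / k)\<close>, so the potential is
  \<open>O(L + (L / k)\<^sup>2 \<Sum>\<^sub>\<sigma>\<^sub>\<le>\<^sub>k\<^sub>+\<^sub>1 w(\<sigma>)) = O(L + L\<^sup>2 / k\<^sup>2 log k)\<close>.\<close>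

section \<open>Gaps of a resident set\<close>

text \<open>A set \<open>S\<close> of positive naturals is the set of resident path tensors, with position \<open>0\<close> the
  always resident tensor preceding the path. \<open>gap S x\<close> is the length of the evicted run just below
  \<open>x\<close>, and \<open>gap_score S t\<close> is the heuristic \<open>h\<^sub>e\<^sub>*\<close> of \<open>t\<close> (lemma \<open>escore_eq_gap_score\<close>).\<close>

definition pred_in :: "nat set \<Rightarrow> nat \<Rightarrow> nat" where
  "pred_in S x = Max (insert 0 {y\<in>S. y < x})"

definition succ_in :: "nat set \<Rightarrow> nat \<Rightarrow> nat" where
  "succ_in S x = Min {y\<in>S. x < y}"

definition gap :: "nat set \<Rightarrow> nat \<Rightarrow> nat" where
  "gap S x = x - pred_in S x - 1"

definition gap_score :: "nat set \<Rightarrow> nat \<Rightarrow> nat" where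
  "gap_score S t = gap S t + gap S (succ_in S t)"

lemma pred_in_ge: "finite S \<Longrightarrow> y \<in> S \<Longrightarrow> y < x \<Longrightarrow> y \<le> pred_in S x"
  unfolding pred_in_def by (rule Max_ge) auto

lemma pred_in_cases: "finite S \<Longrightarrow> pred_in S x = 0 \<or> (pred_in S x \<in> S \<and> pred_in S x < x)"
  using Max_in[of "insert 0 {y\<in>S. y < x}"] unfolding pred_in_def by auto

lemma pred_in_less: "finite S \<Longrightarrow> 0 < x \<Longrightarrow> pred_in S x < x"
  using pred_in_cases by force

lemma pred_in_eqI:
  assumes "finite S" "p = 0 \<or> p \<in> S" "p < x" "\<And>y. y \<in> S \<Longrightarrow> y < x \<Longrightarrow> y \<le> p"
  shows "pred_in S x = p"
  unfolding pred_in_def by (rule Max_eqI) (use assms in auto)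

lemma pred_in_cong: "{y\<in>S. y < x} = {y\<in>T. y < x} \<Longrightarrow> pred_in S x = pred_in T x"
  unfolding pred_in_def by simp

lemma not_in_between_pred_in: "finite S \<Longrightarrow> pred_in S x < y \<Longrightarrow> y < x \<Longrightarrow> y \<notin> S"
  using pred_in_ge by force

lemma
  assumes "finite S" "y \<in> S" "t < y"
  shows succ_in_mem: "succ_in S t \<in> S"
    and less_succ_in: "t < succ_in S t"
    and succ_in_le: "succ_in S t \<le> y"
proof -
  have "succ_in S t \<in> {z\<in>S. t < z}"
    unfolding succ_in_def using assms by (intro Min_in) auto
  then show "succ_in S t \<in> S" "t < succ_in S t" by simp_all
  show "succ_in S t \<le> y"
    unfolding succ_in_def using assms by (intro Min_le) auto
qed

lemmas succ_in_bounds = succ_in_mem less_succ_in succ_in_le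

lemma succ_in_eqI:
  assumes "finite S" "s \<in> S" "t < s" "\<And>y. y \<in> S \<Longrightarrow> t < y \<Longrightarrow> s \<le> y"
  shows "succ_in S t = s"
  unfolding succ_in_def by (rule Min_eqI) (use assms in auto)

lemma not_in_between_succ_in:
  "finite S \<Longrightarrow> y \<in> S \<Longrightarrow> t < z \<Longrightarrow> z < succ_in S t \<Longrightarrow> z \<notin> S"
  using succ_in_le by force

lemma pred_in_succ_in:
  assumes "finite S" "t \<in> S" "y \<in> S" "t < y"
  shows "pred_in S (succ_in S t) = t"
proof (rule pred_in_eqI)
  show "finite S" "t = 0 \<or> t \<in> S" "t < succ_in S t"
    using assms less_succ_in[OF assms(1,3,4)] by auto
  fix z assume "z \<in> S" "z < succ_in S t"
  then show "z \<le> t" using not_in_between_succ_in[OF assms(1,3), of t z] by force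
qed

lemma succ_in_pred_in:
  assumes "finite S" "x \<in> S" "pred_in S x \<in> S" "0 < x"
  shows "succ_in S (pred_in S x) = x"
proof (rule succ_in_eqI)
  show "finite S" "x \<in> S" "pred_in S x < x" using assms pred_in_less by auto
  fix y assume "y \<in> S" "pred_in S x < y"
  then show "x \<le> y" using not_in_between_pred_in[OF assms(1), of x y] by force
qed

lemma pred_in_remove:
  assumes "finite S" "0 \<notin> S" "t \<in> S" "x \<in> S" "x \<noteq> t"
  shows "pred_in (S - {t}) x = (if pred_in S x = t then pred_in S t else pred_in S x)"
proof -
  have x0: "0 < x" and t0: "0 < t" using assms by (auto intro: gr0I)
  have fin: "finite (S - {t})" using assms(1) by simp
  show ?thesis
  proof (cases "pred_in S x = t")
    case True
    have "pred_in (S - {t}) x = pred_in S t"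
    proof (rule pred_in_eqI[OF fin])
      show "pred_in S t = 0 \<or> pred_in S t \<in> S - {t}"
        using pred_in_cases[OF assms(1), of t] by auto
      show "pred_in S t < x"
        using pred_in_less[OF assms(1) t0] pred_in_less[OF assms(1) x0] True by simp
      fix y assume "y \<in> S - {t}" "y < x"
      then show "y \<le> pred_in S t"
        using pred_in_ge[OF assms(1), of y x] pred_in_ge[OF assms(1), of y t] True by force
    qed
    then show ?thesis using True by simp
  next
    case False
    have "pred_in (S - {t}) x = pred_in S x"
      using pred_in_cases[OF assms(1), of x] False pred_in_less[OF assms(1) x0]
        pred_in_ge[OF assms(1), of _ x]
      by (intro pred_in_eqI[OF fin]) auto
    then show ?thesis using False by simp
  qed
qed

lemma gap_remove:
  assumes "finite S" "0 \<notin> S" "t \<in> S" "x \<in> S" "x \<noteq> t"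
  shows "gap (S - {t}) x = (if pred_in S x = t then gap S t + 1 + gap S x else gap S x)"
proof -
  have "0 < x" "0 < t" using assms by (auto intro: gr0I)
  then have "pred_in S x < x" "pred_in S t < t" using pred_in_less[OF assms(1)] by auto
  then show ?thesis unfolding gap_def pred_in_remove[OF assms] by auto
qed

lemma gap_remove_mono:
  assumes "finite S" "0 \<notin> S" "a \<in> S" "x \<in> S - {a}"
  shows "gap S x \<le> gap (S - {a}) x"
  using gap_remove[OF assms(1-3), of x] assms(4) by auto

lemma succ_in_remove:
  assumes "finite S" "t \<in> S" "x \<in> S - {t}" "y \<in> S - {t}" "x < y"
  shows "succ_in (S - {t}) x = (if succ_in S x = t then succ_in S t else succ_in S x)"
proof -
  have fin: "finite (S - {t})" using assms(1) by simp
  have sx: "succ_in S x \<in> S" "x < succ_in S x" "succ_in S x \<le> y"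
    using succ_in_bounds[OF assms(1) _ assms(5)] assms(4) by auto
  show ?thesis
  proof (cases "succ_in S x = t")
    case True
    then have ty: "t < y" using sx assms(4) by auto
    have st: "succ_in S t \<in> S" "t < succ_in S t"
      using succ_in_bounds[OF assms(1) _ ty] assms(4) by auto
    have "succ_in (S - {t}) x = succ_in S t"
    proof (rule succ_in_eqI[OF fin])
      show "succ_in S t \<in> S - {t}" "x < succ_in S t" using st sx True by auto
      fix z assume "z \<in> S - {t}" "x < z"
      then show "succ_in S t \<le> z"
        using succ_in_le[OF assms(1), of z x] succ_in_le[OF assms(1), of z t] True by force
    qed
    then show ?thesis using True by simp
  next
    case False
    have "succ_in (S - {t}) x = succ_in S x"
      using sx False succ_in_le[OF assms(1)] by (intro succ_in_eqI[OF fin]) auto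
    then show ?thesis using False by simp
  qed
qed

lemma gap_insert_above:
  assumes "\<forall>y\<in>S. y < a" "x < a"
  shows "gap (insert a S) x = gap S x"
proof -
  have "pred_in (insert a S) x = pred_in S x" by (rule pred_in_cong) (use assms in auto)
  then show ?thesis unfolding gap_def by simp
qed

lemma succ_in_insert_above:
  assumes "finite S" "\<forall>y\<in>S. y < a" "y \<in> S" "x < y"
  shows "succ_in (insert a S) x = succ_in S x"
proof (rule succ_in_eqI)
  show "finite (insert a S)" using assms(1) by simp
  show "succ_in S x \<in> insert a S" "x < succ_in S x" using succ_in_bounds[OF assms(1,3,4)] by auto
  fix z assume "z \<in> insert a S" "x < z"
  then show "succ_in S x \<le> z"
    using succ_in_le[OF assms(1)] succ_in_bounds[OF assms(1,3,4)] assms(2) by (auto intro: less_imp_le)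
qed

text \<open>The gaps up to \<open>b\<close> and the elements up to \<open>b\<close> tile \<open>{1..b}\<close>.\<close>

lemma sum_gap_upto:
  assumes "finite S" "0 \<notin> S" "b \<in> S \<or> b = 0"
  shows "(\<Sum>x\<in>{y\<in>S. y \<le> b}. gap S x) + card {y\<in>S. y \<le> b} = b"
  using assms(3)
proof (induction b rule: less_induct)
  case (less b)
  show ?case
  proof (cases "b = 0")
    case True
    have empty: "{y\<in>S. y \<le> b} = {}" using True assms(2) by auto
    show ?thesis using True unfolding empty by simp
  next
    case False
    let ?p = "pred_in S b"
    have pb: "?p < b" using pred_in_less[OF assms(1)] False by auto
    have split: "{y\<in>S. y \<le> b} = insert b {y\<in>S. y \<le> ?p}"
      using less.prems False pb pred_in_ge[OF assms(1), of _ b] by force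
    have IH: "(\<Sum>x\<in>{y\<in>S. y \<le> ?p}. gap S x) + card {y\<in>S. y \<le> ?p} = ?p"
      using less.IH[OF pb] pred_in_cases[OF assms(1), of b] by auto
    have "gap S b + ?p + 1 = b" unfolding gap_def using pb by simp
    then show ?thesis unfolding split using IH pb assms(1) by simp
  qed
qed

lemma sum_gap_between:
  assumes "finite S" "0 \<notin> S" "a \<in> S" "b \<in> S" "a \<le> b"
  shows "(\<Sum>x\<in>{y\<in>S. a < y \<and> y \<le> b}. gap S x) + card {y\<in>S. a < y \<and> y \<le> b} = b - a"
proof -
  let ?A = "{y\<in>S. y \<le> a}" and ?B = "{y\<in>S. a < y \<and> y \<le> b}"
  have split: "{y\<in>S. y \<le> b} = ?A \<union> ?B" and disj: "?A \<inter> ?B = {}" using assms(5) by auto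
  have fin: "finite ?A" "finite ?B" using assms(1) by auto
  have "(\<Sum>x\<in>?A. gap S x) + card ?A + ((\<Sum>x\<in>?B. gap S x) + card ?B) = b"
    using sum_gap_upto[OF assms(1,2), of b] assms(4)
    unfolding split sum.union_disjoint[OF fin disj] card_Un_disjoint[OF fin disj] by simp
  then show ?thesis using sum_gap_upto[OF assms(1,2), of a] assms(3) by simp
qed

lemma strict_mono_on_succ_in:
  assumes "finite S" "b \<in> S"
  shows "strict_mono_on {t\<in>S. t < b} (succ_in S)"
proof (rule strict_mono_onI)
  fix x y assume "x \<in> {t\<in>S. t < b}" "y \<in> {t\<in>S. t < b}" "x < y"
  then show "succ_in S x < succ_in S y"
    using succ_in_le[OF assms(1), of y x] less_succ_in[OF assms, of y] by simp
qed

text \<open>Each gap is counted at most twice, once at its upper end and once at the element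
  below it.\<close>

lemma sum_gap_score_le:
  assumes "finite S" "0 \<notin> S" "a \<in> S" "b \<in> S" "a \<le> b" "C \<subseteq> {t\<in>S. a < t \<and> t < b}"
  shows "(\<Sum>t\<in>C. gap_score S t) \<le> 2 * (b - a)"
proof -
  let ?B = "{y\<in>S. a < y \<and> y \<le> b}"
  have finB: "finite ?B" using assms(1) by simp
  have sumB: "(\<Sum>x\<in>?B. gap S x) \<le> b - a"
    using sum_gap_between[OF assms(1-5)] by linarith
  have inj: "inj_on (succ_in S) C"
    by (rule inj_on_subset[OF strict_mono_on_imp_inj_on[OF strict_mono_on_succ_in[OF assms(1,4)]]])
      (use assms(6) in auto)
  have img: "succ_in S ` C \<subseteq> ?B"
  proof
    fix y assume "y \<in> succ_in S ` C"
    then obtain t where "t \<in> C" "y = succ_in S t" by blast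
    then show "y \<in> ?B"
      using assms(6) succ_in_bounds[OF assms(1,4), of t] by force
  qed
  have "(\<Sum>t\<in>C. gap_score S t) = (\<Sum>t\<in>C. gap S t) + (\<Sum>x\<in>succ_in S ` C. gap S x)"
    unfolding gap_score_def sum.distrib sum.reindex[OF inj] by simp
  also have "\<dots> \<le> (\<Sum>x\<in>?B. gap S x) + (\<Sum>x\<in>?B. gap S x)"
    using assms(6) img by (intro add_mono sum_mono2[OF finB]) force+
  finally show ?thesis using sumB by simp
qed

lemma gap_score_eq:
  assumes "finite S" "0 \<notin> S" "t \<in> S" "y \<in> S" "t < y"
  shows "gap_score S t + 2 = succ_in S t - pred_in S t"
proof -
  have "0 < t" using assms(2,3) by (auto intro: gr0I)
  then have "pred_in S t < t" by (rule pred_in_less[OF assms(1)])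
  then show ?thesis
    using less_succ_in[OF assms(1,4,5)] pred_in_succ_in[OF assms(1,3-5)]
    unfolding gap_score_def gap_def by simp
qed

section \<open>The eviction heuristic\<close>

lemma evicted_below_iff:
  assumes fin: "finite R" and rng: "\<forall>x\<in>R. 1 \<le> x \<and> x \<le> j" and tR: "t \<in> R"
  shows "{i..<t} \<subseteq> evicted j R \<longleftrightarrow> pred_in R t < i"
proof
  have "0 < t" using rng tR by auto
  then have pt: "pred_in R t < t" by (rule pred_in_less[OF fin])
  assume sub: "{i..<t} \<subseteq> evicted j R"
  show "pred_in R t < i"
  proof (rule ccontr)
    assume "\<not> pred_in R t < i"
    then have "pred_in R t \<in> {i..<t}" using pt by simp
    then show False using sub pred_in_cases[OF fin, of t] unfolding evicted_def by auto
  qed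
next
  assume "pred_in R t < i"
  then show "{i..<t} \<subseteq> evicted j R"
    using not_in_between_pred_in[OF fin, of t] rng tR unfolding evicted_def by force
qed

lemma evicted_above_iff:
  assumes fin: "finite R" and yR: "y \<in> R" and ty: "t < y" and yj: "y \<le> j"
  shows "{t<..i} \<subseteq> evicted j R \<longleftrightarrow> i < succ_in R t"
proof
  assume sub: "{t<..i} \<subseteq> evicted j R"
  show "i < succ_in R t"
  proof (rule ccontr)
    assume "\<not> i < succ_in R t"
    then have "succ_in R t \<in> {t<..i}" using less_succ_in[OF fin yR ty] by simp
    then show False using sub succ_in_mem[OF fin yR ty] unfolding evicted_def by auto
  qed
next
  assume "i < succ_in R t"
  then show "{t<..i} \<subseteq> evicted j R"
    using not_in_between_succ_in[OF fin yR, of t] succ_in_le[OF fin yR ty] yj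
    unfolding evicted_def by force
qed

lemma escore_eq_gap_score:
  assumes fin: "finite R" and rng: "\<forall>x\<in>R. 1 \<le> x \<and> x \<le> j"
    and tR: "t \<in> R" and yR: "y \<in> R" and ty: "t < y"
  shows "escore j R t = gap_score R t"
proof -
  let ?p = "pred_in R t" and ?s = "succ_in R t"
  have "{i \<in> evicted j R. (i < t \<and> {i..<t} \<subseteq> evicted j R) \<or> (t < i \<and> {t<..i} \<subseteq> evicted j R)}
      = {?p<..<t} \<union> {t<..<?s}" (is "?E = _")
  proof (rule set_eqI)
    fix i
    show "i \<in> ?E \<longleftrightarrow> i \<in> {?p<..<t} \<union> {t<..<?s}"
    proof (cases i t rule: linorder_cases)
      case less
      have "i \<in> {i..<t}" using less by simp
      then show ?thesis using evicted_below_iff[OF fin rng tR, of i] less by auto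
    next
      case greater
      have "i \<in> {t<..i}" using greater by simp
      moreover have yj: "y \<le> j" using rng yR by simp
      ultimately show ?thesis using evicted_above_iff[OF fin yR ty yj, of i] greater by auto
    qed simp
  qed
  then have "escore j R t = card {?p<..<t} + card {t<..<?s}"
    unfolding escore_def by (simp add: card_Un_disjoint)
  also have "\<dots> = gap_score R t"
    using pred_in_succ_in[OF fin tR yR ty] unfolding gap_score_def gap_def by simp
  finally show ?thesis .
qed

lemma gap_score_remove_mono:
  assumes fin: "finite S" and z: "0 \<notin> S" and aS: "a \<in> S"
    and tS: "t \<in> S - {a}" and xS: "x \<in> S - {a}" and tx: "t < x"
  shows "gap_score S t \<le> gap_score (S - {a}) t"
proof -
  have gt: "gap S t \<le> gap (S - {a}) t" using gap_remove_mono[OF fin z aS tS] .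
  have st: "succ_in S t \<in> S" "succ_in S t \<le> x" using succ_in_bounds[OF fin _ tx] xS by auto
  show ?thesis
  proof (cases "succ_in S t = a")
    case True
    then have ax: "a < x" using st xS by auto
    have "succ_in S a \<in> S" "a < succ_in S a" "pred_in S (succ_in S a) = a"
      using succ_in_bounds[OF fin _ ax] pred_in_succ_in[OF fin aS _ ax] xS by auto
    then have "gap (S - {a}) (succ_in S a) = gap S a + 1 + gap S (succ_in S a)"
      using gap_remove[OF fin z aS, of "succ_in S a"] by auto
    then show ?thesis
      using gt True succ_in_remove[OF fin aS tS xS tx] unfolding gap_score_def by simp
  next
    case False
    then have "gap S (succ_in S t) \<le> gap (S - {a}) (succ_in S t)"
      using gap_remove_mono[OF fin z aS] st by auto
    then show ?thesis
      using gt False succ_in_remove[OF fin aS tS xS tx] unfolding gap_score_def by simp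
  qed
qed

text \<open>The invariant maintained by evicting elements of minimal \<open>gap_score\<close>: a gap lying
  strictly above the successor of \<open>t\<close> was created by evicting an element whose score was at most
  that of \<open>t\<close>.\<close>

definition gaps_below_scores :: "nat set \<Rightarrow> bool" where
  "gaps_below_scores S \<longleftrightarrow>
     (\<forall>t\<in>S. \<forall>x\<in>S. t < x \<longrightarrow> succ_in S t < x \<longrightarrow> gap S x \<le> gap_score S t + 1)"

lemma gaps_below_scores_remove_min:
  assumes fin: "finite S" and z: "0 \<notin> S" and inv: "gaps_below_scores S" and aS: "a \<in> S"
    and min: "\<And>t y. t \<in> S \<Longrightarrow> y \<in> S \<Longrightarrow> t < y \<Longrightarrow> gap_score S a \<le> gap_score S t"
  shows "gaps_below_scores (S - {a})"
  unfolding gaps_below_scores_def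
proof (intro ballI impI)
  fix t x assume tS: "t \<in> S - {a}" and xS: "x \<in> S - {a}" and tx: "t < x"
    and sx: "succ_in (S - {a}) t < x"
  have mono: "gap_score S t \<le> gap_score (S - {a}) t"
    using gap_score_remove_mono[OF fin z aS tS xS tx] .
  show "gap (S - {a}) x \<le> gap_score (S - {a}) t + 1"
  proof (cases "pred_in S x = a")
    case True
    have "0 < x" using xS z by (auto intro: gr0I)
    then have "x = succ_in S a" using succ_in_pred_in[OF fin _ _] True xS aS by auto
    then have "gap (S - {a}) x = gap_score S a + 1"
      using gap_remove[OF fin z aS, of x] xS True unfolding gap_score_def by auto
    then show ?thesis using mono min[of t x] tS xS tx by auto
  next
    case False
    have "succ_in (S - {a}) t \<in> S" "t < succ_in (S - {a}) t"
      using succ_in_bounds[OF _ xS tx] fin by auto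
    then have "succ_in S t \<le> succ_in (S - {a}) t" by (rule succ_in_le[OF fin])
    then have "gap S x \<le> gap_score S t + 1" using inv tS xS tx sx unfolding gaps_below_scores_def by auto
    then show ?thesis using gap_remove[OF fin z aS, of x] xS False mono by auto
  qed
qed

lemma gaps_below_scores_insert_above:
  assumes fin: "finite S" and inv: "gaps_below_scores S" and above: "\<forall>y\<in>S. y < a"
    and g0: "gap (insert a S) a = 0"
  shows "gaps_below_scores (insert a S)"
  unfolding gaps_below_scores_def
proof (intro ballI impI)
  fix t x assume tS: "t \<in> insert a S" and xS: "x \<in> insert a S" and tx: "t < x"
    and sx: "succ_in (insert a S) t < x"
  then have tS': "t \<in> S" using above by auto
  show "gap (insert a S) x \<le> gap_score (insert a S) t + 1"
  proof (cases "x = a")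
    case False
    then have xS': "x \<in> S" using xS by simp
    have succ: "succ_in (insert a S) t = succ_in S t"
      using succ_in_insert_above[OF fin above xS' tx] .
    have "gap_score (insert a S) t = gap_score S t"
      unfolding gap_score_def succ using gap_insert_above above tS' succ_in_mem[OF fin xS' tx] by auto
    moreover have "gap S x \<le> gap_score S t + 1"
      using inv tS' xS' tx sx succ unfolding gaps_below_scores_def by auto
    ultimately show ?thesis using gap_insert_above above xS' by auto
  qed (use g0 in simp)
qed

lemma
  assumes fin: "finite S" and z: "0 \<notin> S" and aS: "a \<in> S" and max: "\<forall>y\<in>S. y \<le> a"
  shows gap_remove_max: "x \<in> S - {a} \<Longrightarrow> gap (S - {a}) x = gap S x"
    and succ_in_remove_max:
      "t \<in> S - {a} \<Longrightarrow> x \<in> S - {a} \<Longrightarrow> t < x \<Longrightarrow> succ_in (S - {a}) t = succ_in S t"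
proof -
  assume xS: "x \<in> S - {a}"
  then have "0 < x" using z by (auto intro: gr0I)
  then have "pred_in S x < x" by (rule pred_in_less[OF fin])
  moreover have "x \<le> a" using max xS by simp
  ultimately have "pred_in S x \<noteq> a" by simp
  then show "gap (S - {a}) x = gap S x" using gap_remove[OF fin z aS, of x] xS by auto
next
  assume tS: "t \<in> S - {a}" and xS: "x \<in> S - {a}" and tx: "t < x"
  then have "succ_in S t \<le> x" "x < a" using succ_in_le[OF fin _ tx] max by force+
  then have "succ_in S t \<noteq> a" by simp
  then show "succ_in (S - {a}) t = succ_in S t" using succ_in_remove[OF fin aS tS xS tx] by simp
qed

lemma gaps_below_scores_remove_max:
  assumes fin: "finite S" and z: "0 \<notin> S" and aS: "a \<in> S" and max: "\<forall>y\<in>S. y \<le> a"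
    and inv: "gaps_below_scores S"
  shows "gaps_below_scores (S - {a})"
  unfolding gaps_below_scores_def
proof (intro ballI impI)
  fix t x assume tS: "t \<in> S - {a}" and xS: "x \<in> S - {a}" and tx: "t < x"
    and sx: "succ_in (S - {a}) t < x"
  note gap_eq = gap_remove_max[OF fin z aS max] and succ_eq = succ_in_remove_max[OF fin z aS max]
  have "succ_in S t \<in> S" "succ_in S t \<le> x" using succ_in_bounds[OF fin _ tx] xS by auto
  then have "succ_in S t \<in> S - {a}" using xS max by auto
  then have "gap_score (S - {a}) t = gap_score S t"
    unfolding gap_score_def succ_eq[OF tS xS tx] using gap_eq tS by simp
  moreover have "gap S x \<le> gap_score S t + 1"
    using inv tS xS tx sx succ_eq[OF tS xS tx] unfolding gaps_below_scores_def by auto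
  ultimately show "gap (S - {a}) x \<le> gap_score (S - {a}) t + 1" using gap_eq[OF xS] by simp
qed

section \<open>Recomputation within one gradient step\<close>

text \<open>The state just before gradient \<open>g\<^sub>j\<close> is computed: \<open>R0\<close> is the set of resident path
  tensors and the banished \<open>x\<^sub>(\<^sub>j\<^sub>+\<^sub>1\<^sub>)\<close> acts as a resident sentinel above the path.\<close>

locale grad_phase =
  fixes k j :: nat and R0 :: "nat set"
  assumes two_le_k: "2 \<le> k" and finite_R0: "finite R0" and R0_range: "\<forall>x\<in>R0. 1 \<le> x \<and> x \<le> j"
    and card_R0: "card R0 + 1 \<le> k" and R0_gaps_below_scores: "gaps_below_scores (insert (Suc j) R0)"
begin

text \<open>\<open>r\<close> is the top resident tensor, \<open>u\<close> the number of tensors to recompute before \<open>g\<^sub>j\<close>,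
  and \<open>m\<close> the number of memory units available to them.\<close>

definition "r = Max (insert 0 R0)"
definition "n = card R0"
definition "u = j - r"
definition "m = k + 1 - n"

lemma le_r: "x \<in> R0 \<Longrightarrow> x \<le> r"
  unfolding r_def using finite_R0 by (intro Max_ge) auto

lemma r_cases: "r \<in> R0 \<or> (r = 0 \<and> R0 = {})"
proof -
  have "r \<in> insert 0 R0" unfolding r_def using finite_R0 by (intro Max_in) auto
  moreover have "r \<noteq> 0" if "x \<in> R0" for x using le_r[OF that] R0_range that by fastforce
  ultimately show ?thesis by auto
qed

lemma r_le_j: "r \<le> j"
  using r_cases R0_range by auto

lemma zero_notin_R0: "0 \<notin> R0"
  using R0_range by auto

lemma n_less_k: "n + 1 \<le> k"
  unfolding n_def using card_R0 .

lemma two_le_m: "2 \<le> m"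
  unfolding m_def using n_less_k by simp

lemma pred_in_sentinel: "pred_in (insert (Suc j) R0) (Suc j) = r"
  using finite_R0 r_cases r_le_j le_r by (intro pred_in_eqI) auto

lemma gap_sentinel: "gap (insert (Suc j) R0) (Suc j) = u"
  unfolding gap_def pred_in_sentinel u_def by simp

text \<open>Invariant while \<open>x\<^sub>r\<^sub>+\<^sub>1, \<dots>, x\<^sub>t\<^sub>p\<close> are recomputed: tensors below \<open>r\<close> are untouched and
  have scores at least \<open>u - 1\<close>, so that only new tensors get evicted, and the gaps among the new
  tensors are \<open>O(u / m)\<close>.\<close>

definition mat_inv :: "nat set \<Rightarrow> nat \<Rightarrow> bool" where
  "mat_inv R tp \<longleftrightarrow> finite R \<and> (\<forall>x\<in>R. 1 \<le> x \<and> x \<le> tp) \<and> (tp \<in> R \<or> (tp = 0 \<and> R = {}))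
     \<and> r \<le> tp \<and> tp \<le> j \<and> {x\<in>R. x < r} = {x\<in>R0. x < r} \<and> gaps_below_scores R
     \<and> (\<forall>t\<in>R. t < r \<longrightarrow> u \<le> gap_score R t + 1)
     \<and> (\<forall>x\<in>R. r < x \<longrightarrow> gap R x + 1 \<le> u \<and> (m - 2) * gap R x \<le> 2 * u + (m - 2))"

lemma
  assumes "mat_inv R tp"
  shows mat_inv_finite: "finite R"
    and mat_inv_range: "\<forall>x\<in>R. 1 \<le> x \<and> x \<le> tp"
    and mat_inv_top: "tp \<in> R \<or> (tp = 0 \<and> R = {})"
    and mat_inv_r_le: "r \<le> tp"
    and mat_inv_le_j: "tp \<le> j"
    and mat_inv_below_r: "{x\<in>R. x < r} = {x\<in>R0. x < r}"
    and mat_inv_gaps_below_scores: "gaps_below_scores R"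
    and mat_inv_old_scores: "\<forall>t\<in>R. t < r \<longrightarrow> u \<le> gap_score R t + 1"
    and mat_inv_new_gaps: "\<forall>x\<in>R. r < x \<longrightarrow> gap R x + 1 \<le> u \<and> (m - 2) * gap R x \<le> 2 * u + (m - 2)"
  using assms unfolding mat_inv_def by blast+

lemma mat_inv_low_subset:
  assumes "mat_inv R tp"
  shows "{x\<in>R. x \<le> r} \<subseteq> R0"
proof
  fix x assume x: "x \<in> {x\<in>R. x \<le> r}"
  show "x \<in> R0"
  proof (cases "x < r")
    case True
    then show ?thesis using x mat_inv_below_r[OF assms] by blast
  next
    case False
    then have "x = r" "r \<noteq> 0" using x mat_inv_range[OF assms] by force+
    then show ?thesis using r_cases by simp
  qed
qed

lemma mat_inv_start: "mat_inv R0 r"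
proof -
  let ?S = "insert (Suc j) R0"
  have finS: "finite ?S" using finite_R0 by simp
  have zS: "0 \<notin> ?S" using zero_notin_R0 by simp
  have maxS: "\<forall>y\<in>?S. y \<le> Suc j" using R0_range by auto
  have SR: "?S - {Suc j} = R0" using R0_range by auto
  note gap_eq = gap_remove_max[OF finS zS insertI1 maxS, unfolded SR]
    and succ_eq = succ_in_remove_max[OF finS zS insertI1 maxS, unfolded SR]
  have old: "\<forall>t\<in>R0. t < r \<longrightarrow> u \<le> gap_score R0 t + 1"
  proof (intro ballI impI)
    fix t assume tR: "t \<in> R0" and tr: "t < r"
    have rR: "r \<in> R0" using r_cases tr by auto
    have s: "succ_in ?S t \<in> ?S" "succ_in ?S t \<le> r"
      using succ_in_bounds[OF finS, of r t] rR tr by auto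
    then have "succ_in ?S t \<in> R0" using r_le_j by auto
    then have "gap_score ?S t = gap_score R0 t"
      unfolding gap_score_def succ_eq[OF tR rR tr] using gap_eq tR by simp
    moreover have "gap ?S (Suc j) \<le> gap_score ?S t + 1"
      using R0_gaps_below_scores tR s r_le_j tr unfolding gaps_below_scores_def by force
    ultimately show "u \<le> gap_score R0 t + 1" using gap_sentinel by simp
  qed
  have "\<forall>x\<in>R0. 1 \<le> x \<and> x \<le> r" using R0_range le_r by blast
  moreover have "\<forall>x\<in>R0. r < x \<longrightarrow> gap R0 x + 1 \<le> u \<and> (m - 2) * gap R0 x \<le> 2 * u + (m - 2)"
    using le_r leD by blast
  moreover have "gaps_below_scores R0"
    using gaps_below_scores_remove_max[OF finS zS insertI1 maxS R0_gaps_below_scores] SR by simp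
  ultimately show ?thesis
    unfolding mat_inv_def using finite_R0 r_cases r_le_j old by (intro conjI; (assumption | simp))
qed

lemma mat_inv_insert:
  assumes inv: "mat_inv R tp" and tj: "tp < j"
  shows "mat_inv (insert (Suc tp) R) (Suc tp)"
proof -
  let ?R = "insert (Suc tp) R"
  note fin = mat_inv_finite[OF inv] and rng = mat_inv_range[OF inv] and rt = mat_inv_r_le[OF inv]
  have above: "\<forall>y\<in>R. y < Suc tp" using rng by auto
  have "pred_in ?R (Suc tp) = tp"
    using fin mat_inv_top[OF inv] by (intro pred_in_eqI) auto
  then have g0: "gap ?R (Suc tp) = 0" unfolding gap_def by simp
  have old: "\<forall>t\<in>?R. t < r \<longrightarrow> u \<le> gap_score ?R t + 1"
  proof (intro ballI impI)
    fix t assume "t \<in> ?R" "t < r"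
    then have tR: "t \<in> R" and ttp: "t < tp" and tpR: "tp \<in> R" using rt mat_inv_top[OF inv] by auto
    have "succ_in R t \<in> R" using succ_in_mem[OF fin tpR ttp] .
    then have "gap ?R t = gap R t" "gap ?R (succ_in R t) = gap R (succ_in R t)"
      using gap_insert_above[OF above] above tR by blast+
    then have "gap_score ?R t = gap_score R t"
      unfolding gap_score_def succ_in_insert_above[OF fin above tpR ttp] by simp
    then show "u \<le> gap_score ?R t + 1" using mat_inv_old_scores[OF inv] tR \<open>t < r\<close> by simp
  qed
  have new: "\<forall>x\<in>?R. r < x \<longrightarrow> gap ?R x + 1 \<le> u \<and> (m - 2) * gap ?R x \<le> 2 * u + (m - 2)"
  proof (intro ballI impI)
    fix x assume x: "x \<in> ?R" "r < x"
    show "gap ?R x + 1 \<le> u \<and> (m - 2) * gap ?R x \<le> 2 * u + (m - 2)"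
    proof (cases "x = Suc tp")
      case True
      then show ?thesis using g0 rt tj unfolding u_def by simp
    next
      case False
      then have "x \<in> R" using x by simp
      moreover have "gap ?R x = gap R x" using gap_insert_above[OF above] above \<open>x \<in> R\<close> by blast
      ultimately show ?thesis using mat_inv_new_gaps[OF inv] x by simp
    qed
  qed
  have "{x\<in>?R. x < r} = {x\<in>R. x < r}" using rt by auto
  then have "{x\<in>?R. x < r} = {x\<in>R0. x < r}" using mat_inv_below_r[OF inv] by simp
  moreover have "gaps_below_scores ?R"
    using gaps_below_scores_insert_above[OF fin mat_inv_gaps_below_scores[OF inv] above g0] .
  moreover have "\<forall>x\<in>?R. 1 \<le> x \<and> x \<le> Suc tp" using rng by auto
  ultimately show ?thesis
    unfolding mat_inv_def using fin rt tj old new by (intro conjI; (assumption | simp))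
qed

lemma mat_inv_top_mem: "mat_inv R tp \<Longrightarrow> card R = Suc k \<Longrightarrow> tp \<in> R"
  using mat_inv_top by fastforce

lemma mat_inv_zero_notin: "mat_inv R tp \<Longrightarrow> 0 \<notin> R"
  using mat_inv_range by fastforce

lemma mat_inv_less_top: "mat_inv R tp \<Longrightarrow> v \<in> R \<Longrightarrow> v \<noteq> tp \<Longrightarrow> v < tp"
  using mat_inv_range by fastforce

lemma
  assumes inv: "mat_inv R tp" and card: "card R = Suc k"
  shows m_le_card_new: "m \<le> card {x\<in>R. r < x}"
    and three_le_card_new: "r \<notin> R \<Longrightarrow> 3 \<le> card {x\<in>R. r < x}"
proof -
  let ?L = "{x\<in>R. x \<le> r}" and ?F = "{x\<in>R. r < x}"
  have fin: "finite ?L" "finite ?F" using mat_inv_finite[OF inv] by auto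
  have "card (?L \<union> ?F) = card ?L + card ?F" by (rule card_Un_disjoint[OF fin]) auto
  moreover have "?L \<union> ?F = R" by auto
  ultimately have split: "card ?L + card ?F = Suc k" using card by simp
  have low: "?L \<subseteq> R0" using mat_inv_low_subset[OF inv] .
  then have "card ?L \<le> n" unfolding n_def by (rule card_mono[OF finite_R0])
  then show "m \<le> card ?F" using split unfolding m_def by simp
  assume "r \<notin> R"
  show "3 \<le> card ?F"
  proof (cases "R0 = {}")
    case True
    then have "?L = {}" using low by blast
    then have "card ?L = 0" by (simp only: card.empty)
    then show ?thesis using split two_le_k by linarith
  next
    case False
    then have "r \<in> R0" using r_cases by blast
    then have "card R0 = Suc (card (R0 - {r}))" by (rule card.remove[OF finite_R0])
    moreover have "card ?L \<le> card (R0 - {r})"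
      using low \<open>r \<notin> R\<close> finite_R0 by (intro card_mono) auto
    ultimately have "card ?L + 1 \<le> n" unfolding n_def by simp
    then show ?thesis using split n_less_k by linarith
  qed
qed

lemma lowest_new_element:
  assumes inv: "mat_inv R tp" and card: "card R = Suc k"
  obtains f where "f \<in> R" "r < f" "f < tp" "\<And>x. x \<in> R \<Longrightarrow> r < x \<Longrightarrow> f \<le> x"
proof -
  let ?F = "{x\<in>R. r < x}"
  have fin: "finite ?F" using mat_inv_finite[OF inv] by simp
  have two: "2 \<le> card ?F" using m_le_card_new[OF inv card] two_le_m by simp
  then have "?F \<noteq> {}" using card_gt_0_iff by fastforce
  then have f: "Min ?F \<in> ?F" "\<And>x. x \<in> ?F \<Longrightarrow> Min ?F \<le> x"
    using Min_in[OF fin] Min_le[OF fin] by blast+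
  have "Min ?F < tp"
  proof (rule ccontr)
    assume "\<not> Min ?F < tp"
    have "?F \<subseteq> {tp}"
    proof
      fix x assume "x \<in> ?F"
      then have "Min ?F \<le> x" "x \<le> tp" using f(2) mat_inv_range[OF inv] by auto
      then show "x \<in> {tp}" using \<open>\<not> Min ?F < tp\<close> by simp
    qed
    then show False using two card_mono[of "{tp}" ?F] by simp
  qed
  then show ?thesis using that f by auto
qed

lemma gap_score_bound_above_r:
  assumes inv: "mat_inv R tp" and card: "card R = Suc k" and tR: "t \<in> R" and ttp: "t < tp"
    and rp: "r \<le> pred_in R t"
  shows "gap_score R t + 2 \<le> u"
proof -
  note fin = mat_inv_finite[OF inv] and tpR = mat_inv_top_mem[OF inv card]
    and z = mat_inv_zero_notin[OF inv]
  show ?thesis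
    using gap_score_eq[OF fin z tR tpR ttp] succ_in_le[OF fin tpR ttp] mat_inv_le_j[OF inv] rp
    unfolding u_def by simp
qed

lemma succ_lowest_new_less_top:
  assumes inv: "mat_inv R tp" and card: "card R = Suc k" and rR: "r \<notin> R"
    and ftp: "f < tp" and fmin: "\<And>x. x \<in> R \<Longrightarrow> r < x \<Longrightarrow> f \<le> x"
  shows "succ_in R f < tp"
proof (rule ccontr)
  note fin = mat_inv_finite[OF inv] and tpR = mat_inv_top_mem[OF inv card]
  assume "\<not> succ_in R f < tp"
  then have top: "succ_in R f = tp" using succ_in_le[OF fin tpR ftp] by simp
  have "{x\<in>R. r < x} \<subseteq> {f, tp}"
  proof
    fix x assume x: "x \<in> {x\<in>R. r < x}"
    show "x \<in> {f, tp}"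
    proof (cases "x = f")
      case False
      then have "f < x" using fmin x by force
      then have "tp \<le> x" using succ_in_le[OF fin, of x f] x top by simp
      then show ?thesis using x mat_inv_range[OF inv] by force
    qed simp
  qed
  then have "card {x\<in>R. r < x} \<le> card {f, tp}" by (intro card_mono) auto
  also have "\<dots> \<le> 2" by (simp add: card_insert_if)
  finally show False using three_le_card_new[OF inv card rR] by simp
qed

text \<open>The witness is the lowest new element if \<open>x\<^sub>r\<close> is still resident, and the second lowest
  otherwise.\<close>

lemma exists_low_score:
  assumes inv: "mat_inv R tp" and card: "card R = Suc k"
  shows "\<exists>w\<in>R. w \<noteq> tp \<and> gap_score R w + 2 \<le> u"
proof -
  note fin = mat_inv_finite[OF inv] and tpR = mat_inv_top_mem[OF inv card]
  obtain f where fR: "f \<in> R" and rf: "r < f" and ftp: "f < tp"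
    and fmin: "\<And>x. x \<in> R \<Longrightarrow> r < x \<Longrightarrow> f \<le> x"
    using lowest_new_element[OF inv card] by blast
  show ?thesis
  proof (cases "r \<in> R")
    case True
    have "pred_in R f = r"
    proof (rule pred_in_eqI[OF fin])
      show "r = 0 \<or> r \<in> R" "r < f" using True rf by simp_all
      fix y assume "y \<in> R" "y < f"
      then show "y \<le> r" using fmin[of y] by (rule_tac ccontr) simp
    qed
    then show ?thesis using gap_score_bound_above_r[OF inv card fR ftp] fR ftp by auto
  next
    case False
    let ?f2 = "succ_in R f"
    have f2R: "?f2 \<in> R" using succ_in_mem[OF fin tpR ftp] .
    have f2tp: "?f2 < tp" using succ_lowest_new_less_top[OF inv card False ftp fmin] .
    have "pred_in R ?f2 = f" using pred_in_succ_in[OF fin fR tpR ftp] .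
    then have "gap_score R ?f2 + 2 \<le> u" using gap_score_bound_above_r[OF inv card f2R f2tp] rf by simp
    then show ?thesis using f2R f2tp by auto
  qed
qed

text \<open>Averaging: the evicted element scores at most the mean of the \<open>m - 2\<close> new elements
  strictly between the lowest new one and the top.\<close>

lemma evicted_score_bound:
  assumes inv: "mat_inv R tp" and card: "card R = Suc k"
    and min: "\<And>v. v \<in> R \<Longrightarrow> v \<noteq> tp \<Longrightarrow> gap_score R a \<le> gap_score R v"
  shows "(m - 2) * gap_score R a \<le> 2 * u"
proof -
  note fin = mat_inv_finite[OF inv] and tpR = mat_inv_top_mem[OF inv card]
    and z = mat_inv_zero_notin[OF inv]
  obtain f where fR: "f \<in> R" and rf: "r < f" and ftp: "f < tp"
    and fmin: "\<And>x. x \<in> R \<Longrightarrow> r < x \<Longrightarrow> f \<le> x"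
    using lowest_new_element[OF inv card] by blast
  define C where "C = {x\<in>R. r < x} - {f, tp}"
  have "{f, tp} \<subseteq> {x\<in>R. r < x}" using fR rf tpR ftp by simp
  then have "card C = card {x\<in>R. r < x} - card {f, tp}"
    unfolding C_def by (intro card_Diff_subset) simp_all
  then have "card C = card {x\<in>R. r < x} - 2" using ftp by simp
  then have cardC: "m - 2 \<le> card C" using m_le_card_new[OF inv card] by simp
  have C_between: "C \<subseteq> {t\<in>R. f < t \<and> t < tp}"
  proof
    fix x assume "x \<in> C"
    then have "x \<in> R" "r < x" "x \<noteq> f" "x \<noteq> tp" unfolding C_def by auto
    then show "x \<in> {t\<in>R. f < t \<and> t < tp}"
      using fmin[of x] mat_inv_less_top[OF inv, of x] by simp
  qed
  have "(m - 2) * gap_score R a \<le> card C * gap_score R a" using cardC by simp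
  also have "\<dots> = (\<Sum>t\<in>C. gap_score R a)" by simp
  also have "\<dots> \<le> (\<Sum>t\<in>C. gap_score R t)"
    using C_between by (intro sum_mono min) auto
  also have "\<dots> \<le> 2 * (tp - f)" using sum_gap_score_le[OF fin z fR tpR _ C_between] ftp by simp
  also have "\<dots> \<le> 2 * u" using rf mat_inv_le_j[OF inv] unfolding u_def by simp
  finally show ?thesis .
qed

lemma gap_score_min_of_escore_min:
  assumes inv: "mat_inv R tp" and card: "card R = Suc k" and aR: "a \<in> R" and atp: "a \<noteq> tp"
    and min: "\<forall>v\<in>R. v \<noteq> tp \<longrightarrow> escore j R a \<le> escore j R v"
    and vR: "v \<in> R" and vtp: "v \<noteq> tp"
  shows "gap_score R a \<le> gap_score R v"
proof -
  note fin = mat_inv_finite[OF inv] and tpR = mat_inv_top_mem[OF inv card]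
    and below_tp = mat_inv_less_top[OF inv]
  have range_j: "\<forall>x\<in>R. 1 \<le> x \<and> x \<le> j" using mat_inv_range[OF inv] mat_inv_le_j[OF inv] by auto
  show ?thesis
    using min vR vtp escore_eq_gap_score[OF fin range_j aR tpR below_tp[OF aR atp]]
      escore_eq_gap_score[OF fin range_j vR tpR below_tp[OF vR vtp]] by metis
qed

lemma min_score_bound:
  assumes inv: "mat_inv R tp" and card: "card R = Suc k"
    and min: "\<And>v. v \<in> R \<Longrightarrow> v \<noteq> tp \<Longrightarrow> gap_score R a \<le> gap_score R v"
  shows "gap_score R a + 2 \<le> u"
proof -
  obtain w where "w \<in> R" "w \<noteq> tp" "gap_score R w + 2 \<le> u" using exists_low_score[OF inv card] by blast
  then show ?thesis using min[of w] by simp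
qed

lemma new_gap_remove_min_score:
  assumes inv: "mat_inv R tp" and card: "card R = Suc k" and aR: "a \<in> R"
    and min: "\<And>v. v \<in> R \<Longrightarrow> v \<noteq> tp \<Longrightarrow> gap_score R a \<le> gap_score R v"
    and xR: "x \<in> R - {a}" and rx: "r < x"
  shows "gap (R - {a}) x + 1 \<le> u \<and> (m - 2) * gap (R - {a}) x \<le> 2 * u + (m - 2)"
proof (cases "pred_in R x = a")
  case True
  note fin = mat_inv_finite[OF inv] and z = mat_inv_zero_notin[OF inv]
  have "0 < x" using xR z by (auto intro: gr0I)
  then have "x = succ_in R a" using succ_in_pred_in[OF fin] True xR aR by auto
  then have "gap (R - {a}) x = gap_score R a + 1"
    using gap_remove[OF fin z aR, of x] xR True unfolding gap_score_def by auto
  then show ?thesis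
    using min_score_bound[OF inv card min] evicted_score_bound[OF inv card min]
    by (simp add: distrib_left)
next
  case False
  then have "gap (R - {a}) x = gap R x"
    using gap_remove[OF mat_inv_finite[OF inv] mat_inv_zero_notin[OF inv] aR, of x] xR by auto
  then show ?thesis using mat_inv_new_gaps[OF inv] xR rx by simp
qed

lemma mat_inv_evict:
  assumes inv: "mat_inv R tp" and card: "card R = Suc k" and aR: "a \<in> R" and atp: "a \<noteq> tp"
    and min: "\<forall>v\<in>R. v \<noteq> tp \<longrightarrow> escore j R a \<le> escore j R v"
  shows "mat_inv (R - {a}) tp"
proof -
  note fin = mat_inv_finite[OF inv] and tpR = mat_inv_top_mem[OF inv card]
    and z = mat_inv_zero_notin[OF inv]
  note score_min = gap_score_min_of_escore_min[OF inv card aR atp min]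
  have ra: "r \<le> a"
  proof (rule ccontr)
    assume "\<not> r \<le> a"
    then have "u \<le> gap_score R a + 1" using mat_inv_old_scores[OF inv] aR by simp
    then show False using min_score_bound[OF inv card score_min] by simp
  qed
  have tpR': "tp \<in> R - {a}" using tpR atp by simp
  have old: "\<forall>t\<in>R - {a}. t < r \<longrightarrow> u \<le> gap_score (R - {a}) t + 1"
  proof (intro ballI impI)
    fix t assume tR: "t \<in> R - {a}" and tr: "t < r"
    then have "gap_score R t \<le> gap_score (R - {a}) t"
      using gap_score_remove_mono[OF fin z aR tR tpR'] mat_inv_r_le[OF inv] by simp
    moreover have "u \<le> gap_score R t + 1" using mat_inv_old_scores[OF inv] tR tr by simp
    ultimately show "u \<le> gap_score (R - {a}) t + 1" by simp
  qed
  have new: "\<forall>x\<in>R - {a}. r < x \<longrightarrow> gap (R - {a}) x + 1 \<le> u \<and> (m - 2) * gap (R - {a}) x \<le> 2 * u + (m - 2)"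
    using new_gap_remove_min_score[OF inv card aR score_min] by blast
  have "{x\<in>R - {a}. x < r} = {x\<in>R. x < r}" using ra by auto
  then have "{x\<in>R - {a}. x < r} = {x\<in>R0. x < r}" using mat_inv_below_r[OF inv] by simp
  moreover have "gap_score R a \<le> gap_score R t" if "t \<in> R" "y \<in> R" "t < y" for t y
  proof -
    have "y \<le> tp" using that(2) mat_inv_range[OF inv] by simp
    then show ?thesis using score_min[of t] that by simp
  qed
  then have "gaps_below_scores (R - {a})"
    using gaps_below_scores_remove_min[OF fin z mat_inv_gaps_below_scores[OF inv] aR] by blast
  moreover have "\<forall>x\<in>R - {a}. 1 \<le> x \<and> x \<le> tp" using mat_inv_range[OF inv] by blast
  ultimately show ?thesis
    unfolding mat_inv_def
    using fin tpR' mat_inv_r_le[OF inv] mat_inv_le_j[OF inv] old new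
    by (intro conjI; (assumption | simp))
qed

lemma mat_inv_alloc:
  assumes "alloc k' j' lock R R'" "k' = k" "j' = j" "lock = tp" "mat_inv R tp" "card R \<le> Suc k"
  shows "mat_inv R' tp \<and> card R' = min k (card R)"
  using assms
proof (induction rule: alloc.induct)
  case (alloc_done R k' j' lock)
  then show ?case by simp
next
  case (alloc_evict R k' j' lock R1 R2)
  then have card: "card R = Suc k" by simp
  obtain t where tR: "t \<in> R" and tl: "t \<noteq> lock" and R1: "R1 = R - {t}"
    and min: "\<forall>v\<in>R. v \<noteq> lock \<longrightarrow> escore j' R t \<le> escore j' R v"
    using alloc_evict.hyps(2) unfolding evict_step_def by blast
  have inv1: "mat_inv R1 tp"
    unfolding R1 using mat_inv_evict[OF alloc_evict.prems(4) card tR] tl min alloc_evict.prems(2,3)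
    by simp
  have "card R1 = k" unfolding R1 using card tR mat_inv_finite[OF alloc_evict.prems(4)] by simp
  then show ?case using alloc_evict.IH alloc_evict.prems(1-3) inv1 card by simp
qed

lemma mat_inv_mat:
  assumes "mat k' j' i R R' c" "k' = k" "j' = j" "R = R0" "r \<le> i" "i \<le> j"
  shows "mat_inv R' i \<and> c = i - r \<and> card R' = min (Suc k) (n + (i - r))"
  using assms
proof (induction rule: mat.induct)
  case (mat_res i R k' j')
  then have "i = r" using le_r by fastforce
  then show ?case using mat_inv_start mat_res.prems(3) card_R0 unfolding n_def by simp
next
  case (mat_comp i R k' j' R1 c R2)
  have "i \<noteq> r" using r_cases mat_comp.hyps(1,2) mat_comp.prems(3) by auto
  then have ri: "r < i" using mat_comp.prems(4) by simp
  then have IH: "mat_inv R1 (i - 1) \<and> c = i - 1 - r \<and> card R1 = min (Suc k) (n + (i - 1 - r))"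
    using mat_comp.IH mat_comp.prems by simp
  have A: "mat_inv R2 (i - 1) \<and> card R2 = min k (card R1)"
    using mat_inv_alloc[OF mat_comp.hyps(4)] mat_comp.prems(1,2) IH by simp
  then have inv2: "mat_inv R2 (i - 1)" by simp
  have inv: "mat_inv (insert i R2) i"
    using mat_inv_insert[of R2 "i - 1"] A mat_comp.hyps(1) mat_comp.prems(5) by simp
  have "i \<notin> R2" using mat_inv_range[of R2 "i - 1"] A mat_comp.hyps(1) by force
  then have "card (insert i R2) = Suc (card R2)" using mat_inv_finite[OF inv2] by simp
  also have "\<dots> = min (Suc k) (n + (i - r))" using A IH ri by simp
  finally show ?case using IH ri inv by simp
qed

lemma grad_step_mat_inv:
  assumes "grad_step k j R0 R1 c"
  obtains S where "R1 = S - {j}" "mat_inv S j" "card S = min k (n + u)" "c = Suc u"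
proof -
  obtain Ra c0 Rb where R1: "R1 = Rb - {j}" and c: "c = Suc c0"
    and mat: "mat k j j R0 Ra c0" and al: "alloc k j j Ra Rb"
    using assms by (cases rule: grad_step.cases) blast
  have M: "mat_inv Ra j \<and> c0 = j - r \<and> card Ra = min (Suc k) (n + (j - r))"
    using mat_inv_mat[OF mat] r_le_j by simp
  have "mat_inv Rb j \<and> card Rb = min k (card Ra)"
    using mat_inv_alloc[OF al] M by simp
  then show ?thesis using that R1 c M unfolding u_def by simp
qed

end

section \<open>The potential\<close>

lemma sum_squares_le_square_sum:
  fixes f :: "'a \<Rightarrow> real"
  assumes "finite A" "\<And>x. x \<in> A \<Longrightarrow> 0 \<le> f x"
  shows "(\<Sum>x\<in>A. (f x)\<^sup>2) \<le> (\<Sum>x\<in>A. f x)\<^sup>2"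
  using assms
proof (induction A rule: finite_induct)
  case (insert a A)
  have "0 \<le> f a" "0 \<le> (\<Sum>x\<in>A. f x)" using insert.prems by (auto intro: sum_nonneg)
  then have "(f a)\<^sup>2 + (\<Sum>x\<in>A. f x)\<^sup>2 \<le> (f a + (\<Sum>x\<in>A. f x))\<^sup>2"
    by (simp add: power2_sum)
  then show ?case using insert by simp
qed simp

lemma two_squares_le:
  fixes g d U rho :: real
  assumes "d + 1 \<le> g" "g \<le> U - 1" "0 \<le> rho" "rho \<le> U + d - 1 - g" "0 \<le> d"
  shows "g\<^sup>2 + rho\<^sup>2 \<le> (U - 1)\<^sup>2 + d\<^sup>2"
proof -
  have "rho\<^sup>2 \<le> (U + d - 1 - g)\<^sup>2" using assms by (intro power_mono) auto
  moreover have "g\<^sup>2 + (U + d - 1 - g)\<^sup>2 - (U - 1)\<^sup>2 - d\<^sup>2 = 2 * (g - (U - 1)) * (g - d)"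
    by (simp add: power2_eq_square algebra_simps)
  moreover have "2 * (g - (U - 1)) * (g - d) \<le> 0"
    using assms by (simp add: mult_nonneg_nonpos2 mult_le_0_iff)
  ultimately show ?thesis by linarith
qed

lemma square_gap_bound:
  fixes p q g u :: nat
  assumes "q * g \<le> 2 * u + q" "p \<le> 2 * q" "q \<le> u" "0 < p"
  shows "(real g)\<^sup>2 \<le> 36 * (real u)\<^sup>2 / (real p)\<^sup>2"
proof -
  have "p * g \<le> 2 * (q * g)" using assms(2) by (simp add: mult_right_mono)
  also have "\<dots> \<le> 6 * u" using assms(1,3) by linarith
  finally have "real p * real g \<le> 6 * real u" by (simp only: of_nat_mult[symmetric] of_nat_le_iff)
  then have "real g \<le> 6 * real u / real p" using assms(4) by (simp add: field_simps)
  then have "(real g)\<^sup>2 \<le> (6 * real u / real p)\<^sup>2" by (intro power_mono) auto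
  then show ?thesis by (simp add: power_divide power_mult_distrib)
qed

lemma sum_inverse_le_ln: "1 \<le> N \<Longrightarrow> (\<Sum>i\<in>{2..N}. 1 / real i) \<le> ln (real N)"
proof (induction N rule: dec_induct)
  case (step N)
  have N0: "0 < real N" using step.hyps by simp
  have "ln (real N / real (Suc N)) \<le> real N / real (Suc N) - 1" using N0 by (intro ln_le_minus_one) simp
  moreover have "ln (real N / real (Suc N)) = ln (real N) - ln (real (Suc N))" using N0 by (simp add: ln_div)
  moreover have "real N / real (Suc N) - 1 = - (1 / real (Suc N))" by (simp add: field_simps)
  moreover have "{2..Suc N} = insert (Suc N) {2..N}" using step.hyps by auto
  ultimately show ?case using step.IH by simp
qed simp

definition rank :: "nat set \<Rightarrow> nat \<Rightarrow> nat" where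
  "rank S x = card {y\<in>S. y \<le> x}"

lemma strict_mono_on_rank:
  assumes "finite S"
  shows "strict_mono_on S (rank S)"
proof (rule strict_mono_onI)
  fix x y assume "x \<in> S" "y \<in> S" "x < y"
  then have "{z\<in>S. z \<le> x} \<subseteq> {z\<in>S. z \<le> y}" "y \<in> {z\<in>S. z \<le> y}" "y \<notin> {z\<in>S. z \<le> x}"
    by auto
  then have "{z\<in>S. z \<le> x} \<subset> {z\<in>S. z \<le> y}" by blast
  then show "rank S x < rank S y" unfolding rank_def by (rule psubset_card_mono[rotated]) (use assms in simp)
qed

lemma rank_bounds:
  assumes "finite S" "x \<in> S"
  shows "1 \<le> rank S x" "rank S x \<le> card S"
proof -
  have "x \<in> {y\<in>S. y \<le> x}" using assms(2) by simp
  then show "1 \<le> rank S x" unfolding rank_def using assms(1) by (auto simp: Suc_le_eq card_gt_0_iff)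
  show "rank S x \<le> card S" unfolding rank_def by (rule card_mono[OF assms(1)]) auto
qed

lemma sum_over_slots_le:
  fixes w :: "nat \<Rightarrow> real"
  assumes "finite S" "card S \<le> k" "\<And>\<sigma>. 0 \<le> w \<sigma>"
  shows "(\<Sum>x\<in>S. w (k + 2 - rank S x)) \<le> (\<Sum>\<sigma>\<in>{2..k+1}. w \<sigma>)"
proof -
  let ?h = "\<lambda>x. k + 2 - rank S x"
  have inj: "inj_on ?h S"
  proof (rule inj_onI)
    fix x y assume "x \<in> S" "y \<in> S" "?h x = ?h y"
    then have "rank S x = rank S y" using rank_bounds[OF assms(1)] assms(2) by fastforce
    then show "x = y"
      using strict_mono_on_imp_inj_on[OF strict_mono_on_rank[OF assms(1)]] \<open>x \<in> S\<close> \<open>y \<in> S\<close>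
      by (simp add: inj_on_def)
  qed
  have "?h ` S \<subseteq> {2..k+1}" using rank_bounds[OF assms(1)] assms(2) by fastforce
  then have "(\<Sum>\<sigma>\<in>?h ` S. w \<sigma>) \<le> (\<Sum>\<sigma>\<in>{2..k+1}. w \<sigma>)"
    using assms(3) by (intro sum_mono2) auto
  then show ?thesis using sum.reindex[OF inj, of w] by simp
qed

text \<open>In the potential, \<open>k + 2 - rank S x\<close> counts the memory slots from \<open>x\<close> up to the sentinel;
  the slot weights decay like \<open>1 / \<sigma>\<close>, so that a full memory has total weight \<open>O(log k)\<close>. The
  constant \<open>40\<close> only has to exceed \<open>36 = 6\<^sup>2\<close>, coming from the bound \<open>6 u / m\<close> on new gaps. The
  linear part \<open>2 max S - card S\<close> alone pays for a gradient step without evictions.\<close>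

definition weight :: "nat \<Rightarrow> real" where
  "weight \<sigma> = 40 / real (max \<sigma> 40)"

definition gap_term :: "nat \<Rightarrow> nat set \<Rightarrow> nat \<Rightarrow> real" where
  "gap_term k S x = weight (k + 2 - rank S x) * (real (gap S x))\<^sup>2"

definition gap_potential :: "nat \<Rightarrow> nat set \<Rightarrow> real" where
  "gap_potential k S = (\<Sum>x\<in>S. gap_term k S x)"

definition potential :: "nat \<Rightarrow> nat set \<Rightarrow> real" where
  "potential k S = gap_potential k S + 2 * real (Max S) - real (card S) - 1"

lemma weight_nonneg: "0 \<le> weight \<sigma>"
  unfolding weight_def by simp

lemma weight_le_one: "weight \<sigma> \<le> 1"
  unfolding weight_def by simp

lemma weight_eq_one: "\<sigma> \<le> 40 \<Longrightarrow> weight \<sigma> = 1"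
  unfolding weight_def by (simp add: max_def)

lemma weight_eq_inverse: "40 \<le> \<sigma> \<Longrightarrow> weight \<sigma> = 40 / real \<sigma>"
  unfolding weight_def by (simp add: max_def)

lemma sum_weight_le_ln:
  assumes "2 \<le> k"
  shows "(\<Sum>\<sigma>\<in>{2..k+1}. weight \<sigma>) \<le> 80 * ln (real k)"
proof -
  have "(\<Sum>\<sigma>\<in>{2..k+1}. weight \<sigma>) \<le> (\<Sum>\<sigma>\<in>{2..k+1}. 40 * (1 / real \<sigma>))"
    unfolding weight_def by (intro sum_mono) (auto intro!: divide_left_mono)
  also have "\<dots> = 40 * (\<Sum>\<sigma>\<in>{2..k+1}. 1 / real \<sigma>)" by (simp add: sum_distrib_left)
  also have "\<dots> \<le> 40 * ln (real (k + 1))" using sum_inverse_le_ln[of "k + 1"] by simp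
  also have "\<dots> \<le> 40 * ln ((real k)\<^sup>2)"
  proof -
    have "2 * real k \<le> real k * real k" using assms by (intro mult_right_mono) auto
    then have "1 + real k \<le> (real k)\<^sup>2" using assms unfolding power2_eq_square by linarith
    then show ?thesis using assms by (simp add: ln_mono)
  qed
  also have "\<dots> = 80 * ln (real k)" using assms by (simp add: ln_realpow)
  finally show ?thesis .
qed

lemma gap_term_nonneg: "0 \<le> gap_term k S x"
  unfolding gap_term_def using weight_nonneg by simp

lemma gap_term_le: "gap_term k S x \<le> (real (gap S x))\<^sup>2"
  unfolding gap_term_def using weight_le_one weight_nonneg by (intro mult_left_le_one_le) auto

lemma gap_potential_nonneg: "0 \<le> gap_potential k S"
  unfolding gap_potential_def using gap_term_nonneg by (simp add: sum_nonneg)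

lemma gap_term_cong:
  assumes "{y\<in>S. y \<le> x} = {y\<in>T. y \<le> x}"
  shows "gap_term k S x = gap_term k T x"
proof -
  have "{y\<in>S. y < x} = {y\<in>T. y < x}" using assms by (metis (no_types, lifting) mem_Collect_eq order.strict_implies_order)
  then have "gap S x = gap T x" unfolding gap_def using pred_in_cong by metis
  then show ?thesis unfolding gap_term_def rank_def using assms by simp
qed

section \<open>Amortized cost of the backward pass\<close>

context grad_phase
begin

lemma potential_sentinel:
  "potential k (insert (Suc j) R0)
     = (\<Sum>x\<in>R0. gap_term k R0 x) + weight m * (real u)\<^sup>2 + 2 * real j - real n"
proof -
  let ?S = "insert (Suc j) R0"
  have nj: "Suc j \<notin> R0" using R0_range by auto
  have "{y\<in>?S. y \<le> Suc j} = ?S" using R0_range by auto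
  then have "rank ?S (Suc j) = Suc n" unfolding rank_def n_def using finite_R0 nj by simp
  then have top: "gap_term k ?S (Suc j) = weight m * (real u)\<^sup>2"
    unfolding gap_term_def gap_sentinel m_def using n_less_k by (simp add: Suc_diff_le)
  have "gap_term k ?S x = gap_term k R0 x" if "x \<in> R0" for x
    using that R0_range by (intro gap_term_cong) auto
  then have "gap_potential k ?S = (\<Sum>x\<in>R0. gap_term k R0 x) + weight m * (real u)\<^sup>2"
    unfolding gap_potential_def using finite_R0 nj top by simp
  moreover have "Max ?S = Suc j" using finite_R0 R0_range by (intro Max_eqI) auto
  moreover have "card ?S = Suc n" unfolding n_def using finite_R0 nj by simp
  ultimately show ?thesis unfolding potential_def by simp
qed

end

text \<open>The state after gradient \<open>g\<^sub>j\<close> has been computed, with \<open>S\<close> the resident tensors at that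
  moment (including \<open>x\<^sub>j\<close>, which becomes the next sentinel).\<close>

locale grad_phase_end = grad_phase +
  fixes S :: "nat set"
  assumes end_inv: "mat_inv S j" and card_end: "card S = min k (n + u)" and one_le_j: "1 \<le> j"
begin

definition "low = {x\<in>S. x \<le> r}"
definition "new = {x\<in>S. r < x}"
definition "top_evicted \<longleftrightarrow> r \<in> R0 \<and> r \<notin> S"
definition "low_top = Max (insert 0 low)"

lemma finite_S: "finite S"
  using mat_inv_finite[OF end_inv] .

lemma S_range: "\<forall>x\<in>S. 1 \<le> x \<and> x \<le> j"
  using mat_inv_range[OF end_inv] .

lemma j_in_S: "j \<in> S"
  using mat_inv_top[OF end_inv] one_le_j by auto

lemma zero_notin_S: "0 \<notin> S"
  using S_range by auto

lemma finite_low: "finite low" and finite_new: "finite new"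
  unfolding low_def new_def using finite_S by auto

lemma low_new_disjoint: "low \<inter> new = {}"
  unfolding low_def new_def by auto

lemma low_Un_new: "low \<union> new = S"
  unfolding low_def new_def by auto

lemma card_S_split: "card S = card low + card new"
  using card_Un_disjoint[OF finite_low finite_new low_new_disjoint] low_Un_new by simp

lemma low_eq: "low = (if top_evicted then R0 - {r} else R0)"
proof -
  have sub: "low \<subseteq> R0" unfolding low_def using mat_inv_low_subset[OF end_inv] .
  have sup: "R0 - {r} \<subseteq> low"
  proof
    fix x assume x: "x \<in> R0 - {r}"
    then have "x \<le> r" "x \<noteq> r" using le_r by auto
    then have "x \<in> {x\<in>R0. x < r}" using x by simp
    then have "x \<in> {x\<in>S. x < r}" by (simp only: mat_inv_below_r[OF end_inv])
    then show "x \<in> low" unfolding low_def by simp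
  qed
  have r_low: "r \<in> low \<longleftrightarrow> r \<in> S" unfolding low_def by simp
  show ?thesis
  proof (cases top_evicted)
    case True
    then have "r \<notin> low" using r_low unfolding top_evicted_def by simp
    then show ?thesis using True sub sup by auto
  next
    case False
    then have "R0 \<subseteq> low" using sup r_low unfolding top_evicted_def by auto
    then show ?thesis using False sub by simp
  qed
qed

lemma card_low: "card low + (if top_evicted then 1 else 0) = n"
proof (cases top_evicted)
  case True
  then have "r \<in> R0" unfolding top_evicted_def by simp
  then have "card R0 = Suc (card (R0 - {r}))" by (rule card.remove[OF finite_R0])
  then show ?thesis using low_eq True unfolding n_def by simp
qed (simp add: low_eq n_def)

lemma gap_term_low:
  assumes "x \<in> low"
  shows "gap_term k S x = gap_term k R0 x"
proof (rule gap_term_cong)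
  have xS: "x \<in> S" and xr: "x \<le> r" using assms unfolding low_def by auto
  show "{y\<in>S. y \<le> x} = {y\<in>R0. y \<le> x}"
  proof (cases "x < r")
    case True
    then have "{y\<in>S. y \<le> x} = {y\<in>{y\<in>S. y < r}. y \<le> x}" "{y\<in>R0. y \<le> x} = {y\<in>{y\<in>R0. y < r}. y \<le> x}"
      by auto
    then show ?thesis using mat_inv_below_r[OF end_inv] by simp
  next
    case False
    then have "x = r" "\<not> top_evicted" using xr xS unfolding top_evicted_def by auto
    then have "{y\<in>S. y \<le> x} = R0" using low_eq unfolding low_def by simp
    then show ?thesis using le_r \<open>x = r\<close> by auto
  qed
qed

lemma gap_potential_end:
  "gap_potential k S = (\<Sum>x\<in>low. gap_term k R0 x) + (\<Sum>x\<in>new. gap_term k S x)"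
proof -
  have "gap_potential k S = (\<Sum>x\<in>low \<union> new. gap_term k S x)"
    unfolding gap_potential_def low_Un_new ..
  also have "\<dots> = (\<Sum>x\<in>low. gap_term k S x) + (\<Sum>x\<in>new. gap_term k S x)"
    by (rule sum.union_disjoint[OF finite_low finite_new low_new_disjoint])
  also have "(\<Sum>x\<in>low. gap_term k S x) = (\<Sum>x\<in>low. gap_term k R0 x)"
    by (rule sum.cong[OF refl gap_term_low])
  finally show ?thesis .
qed

lemma potential_end:
  "potential k S = gap_potential k S + 2 * real j - real (card S) - 1"
proof -
  have "Max S = j" using finite_S j_in_S S_range by (intro Max_eqI) auto
  then show ?thesis unfolding potential_def by simp
qed

lemma low_top_cases: "low_top \<in> low \<or> low_top = 0"
  unfolding low_top_def using finite_low Max_in[of "insert 0 low"] by auto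

lemma le_low_top: "x \<in> low \<Longrightarrow> x \<le> low_top"
  unfolding low_top_def using finite_low by simp

lemma low_top_eq: "low_top = (if top_evicted then pred_in R0 r else r)"
proof (cases top_evicted)
  case True
  have "{y\<in>R0. y < r} = R0 - {r}" using le_r by force
  then show ?thesis unfolding low_top_def pred_in_def using low_eq True by simp
next
  case False
  then show ?thesis unfolding low_top_def r_def using low_eq by simp
qed

lemma sum_gap_new: "(\<Sum>x\<in>new. gap S x) + card new + low_top = j"
proof -
  have "low_top \<le> r" using low_top_cases unfolding low_def by auto
  moreover note le_low_top
  ultimately have "{y\<in>S. y \<le> low_top} = low" unfolding low_def by force
  then have "(\<Sum>x\<in>low. gap S x) + card low = low_top"
    using sum_gap_upto[OF finite_S zero_notin_S, of low_top] low_top_cases unfolding low_def by auto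
  moreover have "{y\<in>S. y \<le> j} = S" using S_range by auto
  then have "(\<Sum>x\<in>S. gap S x) + card S = j"
    using sum_gap_upto[OF finite_S zero_notin_S, of j] j_in_S by simp
  moreover have "(\<Sum>x\<in>S. gap S x) = (\<Sum>x\<in>low. gap S x) + (\<Sum>x\<in>new. gap S x)"
    using sum.union_disjoint[OF finite_low finite_new low_new_disjoint] low_Un_new by simp
  ultimately show ?thesis using card_S_split by linarith
qed

lemma card_new_le: "card new \<le> u"
proof -
  have "new \<subseteq> {r<..j}" unfolding new_def using S_range by auto
  then show ?thesis unfolding u_def using card_mono[of "{r<..j}" new] by simp
qed

lemma new_gaps_vanish:
  assumes "n + u \<le> k"
  shows "\<not> top_evicted" and "\<forall>x\<in>new. gap S x = 0"
proof -
  have card: "card low + card new = n + u" using card_S_split card_end assms by simp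
  show "\<not> top_evicted"
  proof
    assume top_evicted
    then have "card low + 1 = n" using card_low by simp
    then show False using card card_new_le by simp
  qed
  then have "card new = u" "low_top = r" using card card_low low_top_eq by simp_all
  then have "(\<Sum>x\<in>new. gap S x) = 0" using sum_gap_new r_le_j unfolding u_def by simp
  then show "\<forall>x\<in>new. gap S x = 0" using finite_new by simp
qed

lemma
  assumes "\<not> n + u \<le> k"
  shows card_S_full: "card S = k" and m_le_u: "m \<le> u"
    and card_new_full: "card new + (if top_evicted then 0 else 1) = m"
  using assms card_end card_S_split card_low n_less_k unfolding m_def by auto

lemma new_terms_top_kept:
  assumes "\<not> n + u \<le> k" "\<not> top_evicted"
  shows "(\<Sum>x\<in>new. gap_term k S x) \<le> (real u - 1)\<^sup>2"
proof -
  have "(\<Sum>x\<in>new. gap S x) + 1 \<le> u"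
    using sum_gap_new card_new_full[OF assms(1)] low_top_eq assms(2) two_le_m unfolding u_def by simp
  then have sum_le: "(\<Sum>x\<in>new. real (gap S x)) \<le> real u - 1"
    by (simp only: of_nat_sum[symmetric])
  have "(\<Sum>x\<in>new. gap_term k S x) \<le> (\<Sum>x\<in>new. (real (gap S x))\<^sup>2)"
    by (intro sum_mono gap_term_le)
  also have "\<dots> \<le> (\<Sum>x\<in>new. real (gap S x))\<^sup>2"
    by (rule sum_squares_le_square_sum[OF finite_new]) simp
  also have "\<dots> \<le> (real u - 1)\<^sup>2"
    using sum_le by (intro power_mono) (auto intro: sum_nonneg)
  finally show ?thesis .
qed

text \<open>If the old top \<open>x\<^sub>r\<close> was evicted, its gap \<open>d\<close> merges into the lowest new gap; that gap
  is at least \<open>d + 1\<close>, and all new gaps together are at most \<open>u + d\<close>.\<close>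

lemma new_terms_top_evicted:
  assumes "\<not> n + u \<le> k" "top_evicted"
  shows "(\<Sum>x\<in>new. gap_term k S x) \<le> (real u - 1)\<^sup>2 + (real (gap R0 r))\<^sup>2"
proof -
  define d where "d = gap R0 r"
  have rR0: "r \<in> R0" using assms(2) unfolding top_evicted_def by simp
  have "0 < r" using rR0 R0_range by force
  then have low_top_less: "low_top < r" using low_top_eq assms(2) pred_in_less[OF finite_R0] by simp
  then have d_low_top: "d + low_top + 1 = r" unfolding d_def gap_def using low_top_eq assms(2) by simp
  have card_new: "card new = m" using card_new_full[OF assms(1)] assms(2) by simp
  then have "new \<noteq> {}" using two_le_m by auto
  define f where "f = Min new"
  have fnew: "f \<in> new" and fmin: "\<And>x. x \<in> new \<Longrightarrow> f \<le> x"
    unfolding f_def using Min_in[OF finite_new \<open>new \<noteq> {}\<close>] Min_le[OF finite_new] by auto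
  then have fS: "f \<in> S" and rf: "r < f" unfolding new_def by auto
  have "pred_in S f = low_top"
  proof (rule pred_in_eqI[OF finite_S])
    show "low_top = 0 \<or> low_top \<in> S" using low_top_cases unfolding low_def by auto
    show "low_top < f" using low_top_less rf by simp
    fix y assume "y \<in> S" "y < f"
    then have "y \<in> low" using fmin[of y] unfolding low_def new_def by force
    then show "y \<le> low_top" by (rule le_low_top)
  qed
  then have g1: "gap S f + low_top + 1 = f" unfolding gap_def using low_top_less rf by simp
  define rest where "rest = (\<Sum>x\<in>new - {f}. gap S x)"
  have "(\<Sum>x\<in>new. gap S x) = gap S f + rest" unfolding rest_def using sum.remove[OF finite_new fnew] .
  then have rest_le: "rest + 1 + gap S f \<le> u + d"
    using sum_gap_new card_new d_low_top two_le_m unfolding u_def by simp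
  have "(\<Sum>x\<in>new. gap_term k S x) \<le> (\<Sum>x\<in>new. (real (gap S x))\<^sup>2)"
    by (intro sum_mono gap_term_le)
  also have "\<dots> = (real (gap S f))\<^sup>2 + (\<Sum>x\<in>new - {f}. (real (gap S x))\<^sup>2)"
    using sum.remove[OF finite_new fnew] .
  also have "(\<Sum>x\<in>new - {f}. (real (gap S x))\<^sup>2) \<le> (real rest)\<^sup>2"
    using sum_squares_le_square_sum[of "new - {f}" "\<lambda>x. real (gap S x)"] finite_new
    unfolding rest_def by simp
  also have "(real (gap S f))\<^sup>2 + (real rest)\<^sup>2 \<le> (real u - 1)\<^sup>2 + (real d)\<^sup>2"
  proof (rule two_squares_le)
    show "real d + 1 \<le> real (gap S f)" using g1 d_low_top rf by simp
    show "real (gap S f) \<le> real u - 1" using mat_inv_new_gaps[OF end_inv] fS rf by fastforce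
    show "real rest \<le> real u + real d - 1 - real (gap S f)" using rest_le by simp
  qed simp_all
  finally show ?thesis unfolding d_def by simp
qed

lemma new_terms_many_slots:
  assumes "\<not> n + u \<le> k" "40 \<le> m"
  shows "(\<Sum>x\<in>new. gap_term k S x) \<le> 36 * (real u)\<^sup>2 / real m"
proof -
  have m0: "0 < real m" using assms(2) by simp
  have gap_sq: "(real (gap S x))\<^sup>2 \<le> 36 * (real u)\<^sup>2 / (real m)\<^sup>2" if "x \<in> new" for x
    using that mat_inv_new_gaps[OF end_inv] m_le_u[OF assms(1)] assms(2) unfolding new_def
    by (intro square_gap_bound[where q = "m - 2"]) auto
  have "card new \<le> m" using card_new_full[OF assms(1)] by (simp split: if_splits)
  have "(\<Sum>x\<in>new. gap_term k S x) \<le> (\<Sum>x\<in>new. 36 * (real u)\<^sup>2 / (real m)\<^sup>2)"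
    using gap_term_le gap_sq by (intro sum_mono) (meson order_trans)
  also have "\<dots> = real (card new) * (36 * (real u)\<^sup>2 / (real m)\<^sup>2)" by simp
  also have "\<dots> \<le> real m * (36 * (real u)\<^sup>2 / (real m)\<^sup>2)"
    using \<open>card new \<le> m\<close> by (intro mult_right_mono) auto
  also have "\<dots> = 36 * (real u)\<^sup>2 / real m" using m0 by (simp add: power2_eq_square field_simps)
  finally show ?thesis .
qed

lemma gap_term_old_top:
  assumes "r \<in> R0" "m < 40"
  shows "gap_term k R0 r = (real (gap R0 r))\<^sup>2"
proof -
  have "{y\<in>R0. y \<le> r} = R0" using le_r by blast
  then have "k + 2 - rank R0 r = m + 1" unfolding rank_def m_def n_def using card_R0 by simp
  then show ?thesis unfolding gap_term_def using assms(2) weight_eq_one by simp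
qed

lemma new_terms_bound:
  assumes "\<not> n + u \<le> k"
  shows "(\<Sum>x\<in>new. gap_term k S x) + real u + 1
    \<le> weight m * (real u)\<^sup>2 + (if top_evicted then gap_term k R0 r else 0) + real m"
proof (cases "m < 40")
  case True
  have "(real u - 1)\<^sup>2 + real u + 1 \<le> (real u)\<^sup>2 + real m"
    using two_le_m by (simp add: power2_eq_square algebra_simps)
  moreover have "(\<Sum>x\<in>new. gap_term k S x) \<le> (real u - 1)\<^sup>2 + (if top_evicted then gap_term k R0 r else 0)"
    using new_terms_top_kept[OF assms] new_terms_top_evicted[OF assms]
      gap_term_old_top[OF _ True] unfolding top_evicted_def by auto
  ultimately show ?thesis using weight_eq_one True by simp
next
  case False
  then have m0: "0 < real m" by simp
  have "real m * real u \<le> real u * real u" using m_le_u[OF assms] by (simp add: mult_right_mono)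
  then have "4 * real u \<le> 4 * (real u)\<^sup>2 / real m" using m0 by (simp add: field_simps power2_eq_square)
  moreover have "weight m * (real u)\<^sup>2 = 36 * (real u)\<^sup>2 / real m + 4 * (real u)\<^sup>2 / real m"
    using weight_eq_inverse False by (simp add: add_divide_distrib[symmetric])
  moreover have "0 \<le> (if top_evicted then gap_term k R0 r else 0)" using gap_term_nonneg by simp
  ultimately show ?thesis using new_terms_many_slots[OF assms] False by linarith
qed

lemma potential_drop: "real (Suc u) + potential k S \<le> potential k (insert (Suc j) R0)"
proof (cases "n + u \<le> k")
  case True
  then have "gap_potential k S = (\<Sum>x\<in>R0. gap_term k R0 x)"
    using gap_potential_end low_eq new_gaps_vanish[OF True] unfolding gap_term_def by simp
  then show ?thesis
    using potential_end potential_sentinel card_end True weight_nonneg[of m] by simp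
next
  case False
  let ?E = "if top_evicted then gap_term k R0 r else 0"
  have "(\<Sum>x\<in>R0. gap_term k R0 x) = (\<Sum>x\<in>low. gap_term k R0 x) + ?E"
  proof (cases top_evicted)
    case True
    then have "r \<in> R0" unfolding top_evicted_def by simp
    then show ?thesis using sum.remove[OF finite_R0 \<open>r \<in> R0\<close>, of "gap_term k R0"] low_eq True by simp
  qed (simp add: low_eq)
  moreover have "real m = real k + 1 - real n" using n_less_k unfolding m_def by simp
  ultimately show ?thesis
    using potential_end potential_sentinel gap_potential_end card_S_full[OF False]
      new_terms_bound[OF False] by simp
qed

lemma grad_phase_next: "grad_phase k (j - 1) (S - {j})"
proof
  show "2 \<le> k" using two_le_k .
  show "finite (S - {j})" using finite_S by simp
  show "\<forall>x\<in>S - {j}. 1 \<le> x \<and> x \<le> j - 1" using S_range by force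
  show "card (S - {j}) + 1 \<le> k"
    using card_end card.remove[OF finite_S j_in_S] by simp
  have "insert (Suc (j - 1)) (S - {j}) = S" using j_in_S one_le_j by auto
  then show "gaps_below_scores (insert (Suc (j - 1)) (S - {j}))"
    using mat_inv_gaps_below_scores[OF end_inv] by simp
qed

text \<open>Starting from an empty memory, every gap is \<open>O(j / k)\<close> after the first gradient.\<close>

lemma gap_potential_first:
  assumes "R0 = {}"
  shows "gap_potential k S \<le> 36 * (real j)\<^sup>2 / (real k)\<^sup>2 * (\<Sum>\<sigma>\<in>{2..k+1}. weight \<sigma>)"
proof -
  have r0: "r = 0" and n0: "n = 0" using assms unfolding r_def n_def by simp_all
  then have uj: "u = j" and mk: "m = k + 1" unfolding u_def m_def by simp_all
  have "{y\<in>S. y \<le> j} = S" using S_range by auto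
  then have sum_gaps: "(\<Sum>x\<in>S. gap S x) + card S = j"
    using sum_gap_upto[OF finite_S zero_notin_S, of j] j_in_S by simp
  have rhs_nonneg: "0 \<le> 36 * (real j)\<^sup>2 / (real k)\<^sup>2 * (\<Sum>\<sigma>\<in>{2..k+1}. weight \<sigma>)"
    by (simp add: sum_nonneg weight_nonneg)
  show ?thesis
  proof (cases "j \<le> k")
    case True
    then have "(\<Sum>x\<in>S. gap S x) = 0" using sum_gaps card_end n0 uj by simp
    then have "gap_potential k S = 0" unfolding gap_potential_def gap_term_def using finite_S by simp
    then show ?thesis using rhs_nonneg by simp
  next
    case False
    have gap_sq: "(real (gap S x))\<^sup>2 \<le> 36 * (real j)\<^sup>2 / (real k)\<^sup>2" if "x \<in> S" for x
      using that mat_inv_new_gaps[OF end_inv] S_range False two_le_k unfolding r0 uj mk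
      by (intro square_gap_bound[where q = "k - 1"]) auto
    have "gap_potential k S \<le> (\<Sum>x\<in>S. weight (k + 2 - rank S x) * (36 * (real j)\<^sup>2 / (real k)\<^sup>2))"
      unfolding gap_potential_def gap_term_def
      by (intro sum_mono mult_left_mono[OF gap_sq weight_nonneg])
    also have "\<dots> = 36 * (real j)\<^sup>2 / (real k)\<^sup>2 * (\<Sum>x\<in>S. weight (k + 2 - rank S x))"
      by (rule trans[OF sum_distrib_right[symmetric] mult.commute])
    also have "\<dots> \<le> 36 * (real j)\<^sup>2 / (real k)\<^sup>2 * (\<Sum>\<sigma>\<in>{2..k+1}. weight \<sigma>)"
      using card_end finite_S weight_nonneg by (intro mult_left_mono sum_over_slots_le) auto
    finally show ?thesis .
  qed
qed

end

lemma grad_step_end: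
  assumes "grad_phase k j R" "grad_step k j R R1 c" "1 \<le> j"
  obtains S where "grad_phase_end k j R S" "R1 = S - {j}" "c = Suc (grad_phase.u j R)"
proof -
  interpret grad_phase k j R by (rule assms(1))
  obtain S where "R1 = S - {j}" "mat_inv S j" "card S = min k (n + u)" "c = Suc u"
    using grad_step_mat_inv[OF assms(2)] .
  then show ?thesis using that assms(3) by (simp add: grad_phase_end_def grad_phase_end_axioms_def assms(1))
qed

lemma run_cost_le_potential:
  assumes "dtr_run k j R c" "grad_phase k j R"
  shows "real c \<le> potential k (insert (Suc j) R)"
  using assms
proof (induction rule: dtr_run.induct)
  case (run_done k R)
  then have "R = {}" unfolding grad_phase_def by auto
  then show ?case using gap_potential_nonneg unfolding potential_def by simp
next
  case (run_step j k R R1 c1 c2)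
  obtain S where phase_end: "grad_phase_end k j R S" and R1: "R1 = S - {j}" and c1: "c1 = Suc (grad_phase.u j R)"
    using grad_step_end[OF run_step.prems run_step.hyps(2,1)] .
  interpret grad_phase_end k j R S by (rule phase_end)
  have "insert (Suc (j - 1)) R1 = S" using R1 j_in_S run_step.hyps(1) by auto
  then have "real c2 \<le> potential k S" using run_step.IH R1 grad_phase_next by simp
  then show ?case using potential_drop c1 by simp
qed

lemma alloc_exists: "finite R \<Longrightarrow> 1 \<le> k \<Longrightarrow> \<exists>R'. alloc k j lock R R' \<and> finite R'"
proof (induction "card R" arbitrary: R rule: less_induct)
  case less
  show ?case
  proof (cases "card R \<le> k")
    case True
    then show ?thesis using alloc_done less.prems(1) by blast
  next
    case False
    then have "card {lock} < card R" using less.prems(2) by simp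
    then have "R - {lock} \<noteq> {}" by (metis Diff_eq_empty_iff card_mono finite.intros leD)
    then obtain t where t: "t \<in> R - {lock}" "\<forall>v. v \<in> R - {lock} \<longrightarrow> escore j R t \<le> escore j R v"
      using ex_has_least_nat[of "\<lambda>x. x \<in> R - {lock}" _ "escore j R"] by blast
    then have "evict_step j lock R (R - {t})" unfolding evict_step_def by blast
    moreover obtain R2 where "alloc k j lock (R - {t}) R2" "finite R2"
      using less.hyps[of "R - {t}"] less.prems card_Diff1_less[OF less.prems(1)] t by auto
    ultimately show ?thesis using alloc_evict False by (meson not_le)
  qed
qed

lemma mat_exists: "finite R \<Longrightarrow> 1 \<le> k \<Longrightarrow> \<exists>R' c. mat k j i R R' c \<and> finite R'"
proof (induction i)
  case 0
  then show ?case using mat_res by blast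
next
  case (Suc i)
  show ?case
  proof (cases "Suc i \<in> R")
    case True
    then show ?thesis using mat_res Suc.prems by blast
  next
    case False
    obtain R1 c where "mat k j i R R1 c" "finite R1" using Suc by blast
    moreover obtain R2 where "alloc k j i R1 R2" "finite R2"
      using alloc_exists Suc.prems(2) calculation(2) by blast
    ultimately have "mat k j (Suc i) R (insert (Suc i) R2) (Suc c)" "finite (insert (Suc i) R2)"
      using mat_comp[of "Suc i" R k j R1 c R2] False by simp_all
    then show ?thesis by blast
  qed
qed

lemma dtr_run_exists: "finite R \<Longrightarrow> 1 \<le> k \<Longrightarrow> \<exists>c. dtr_run k j R c"
proof (induction j arbitrary: R)
  case 0
  then show ?case using run_done by blast
next
  case (Suc j)
  obtain R1 c where "mat k (Suc j) (Suc j) R R1 c" "finite R1" using mat_exists Suc.prems by blast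
  moreover obtain R2 where "alloc k (Suc j) (Suc j) R1 R2" "finite R2"
    using alloc_exists Suc.prems(2) calculation(2) by blast
  ultimately have "grad_step k (Suc j) R (R2 - {Suc j}) (Suc c)" "finite (R2 - {Suc j})"
    using grad_step.intros by auto
  moreover obtain c2 where "dtr_run k j (R2 - {Suc j}) c2" using Suc.IH Suc.prems(2) calculation(2) by blast
  ultimately have "dtr_run k (Suc j) R (Suc c + c2)"
    using run_step[of "Suc j" k R "R2 - {Suc j}" "Suc c" c2] by simp
  then show ?case by blast
qed

lemma dtr_run_cost_bound:
  assumes "2 \<le> k" "dtr_run k L {} c"
  shows "real c \<le> 3 * real L + 2880 * ((real L)\<^sup>2 / (real k)\<^sup>2 * ln (real k))"
proof (cases "L = 0")
  case True
  then show ?thesis using assms(2) by (auto elim: dtr_run.cases)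
next
  case False
  obtain R1 c1 c2 where step: "grad_step k L {} R1 c1" and rest: "dtr_run k (L - 1) R1 c2"
    and c: "c = c1 + c2"
    using assms(2) False by (cases rule: dtr_run.cases) auto
  have phase: "grad_phase k L {}"
    using assms(1) by unfold_locales (simp_all add: gaps_below_scores_def)
  obtain S where phase_end: "grad_phase_end k L {} S" and R1: "R1 = S - {L}"
    and c1: "c1 = Suc (grad_phase.u L {})"
    using grad_step_end[OF phase step] False by auto
  interpret grad_phase_end k L "{}" S by (rule phase_end)
  have "insert (Suc (L - 1)) R1 = S" using R1 j_in_S False by auto
  then have "real c2 \<le> potential k S"
    using run_cost_le_potential[OF rest] R1 grad_phase_next by simp
  also have "\<dots> \<le> gap_potential k S + 2 * real L - 1" using potential_end by simp
  also have "gap_potential k S \<le> 36 * (real L)\<^sup>2 / (real k)\<^sup>2 * (80 * ln (real k))"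
    using gap_potential_first[OF refl]
    by (rule order_trans) (intro mult_left_mono sum_weight_le_ln[OF assms(1)]; simp)
  finally show ?thesis using c c1 unfolding u_def r_def by simp
qed

theorem lemma2:
  "\<exists>C::real. C > 0 \<and>
     (\<forall>(L::nat) (k::nat). k \<ge> 2 \<longrightarrow>
        (\<exists>c. dtr_run k L {} c) \<and>
        (\<forall>c. dtr_run k L {} c \<longrightarrow>
           real c \<le> C * (real L + (real L)\<^sup>2 / (real k)\<^sup>2 * ln (real k))))"
proof (rule exI[of _ 2880], intro conjI allI impI)
  fix L k :: nat assume k: "2 \<le> k"
  show "\<exists>c. dtr_run k L {} c" using dtr_run_exists[of "{}" k L] k by simp
  fix c assume "dtr_run k L {} c"
  then have "real c \<le> 3 * real L + 2880 * ((real L)\<^sup>2 / (real k)\<^sup>2 * ln (real k))"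
    by (rule dtr_run_cost_bound[OF k])
  then show "real c \<le> 2880 * (real L + (real L)\<^sup>2 / (real k)\<^sup>2 * ln (real k))"
    by (simp add: distrib_left)
qed simp

end
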